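(* Let $F_t$, $t\in[0,1]$, be a one-parameter family on a complete metric space $(\mathbb X,d)$ satisfying (H1), (H2), (H3), and let $J=\{1\le i\le N:\mathrm{Lip}(f_{(i,1)},d)=1\}$. If the monoid $\mathbb M(\{f_{(i,1)}:i\in J\})$ is compact, then the lower transition attractor $A_\bullet$ of $F_t$ is compact.
   Context: Let $(\mathbb X,d)$ be a complete metric space. A one-parameter family is $F_t=\{f_{(1,t)},\dots,f_{(N,t)}\}$, $t\in[0,1]$, $N\ge2$, of continuous self-maps of $\mathbb X$. $\mathrm{Lip}(f,d)=\sup_{x\ne y}d(f(x),f(y))/d(x,y)$ and $\mathrm{Lip}(F_t,d)=\max_i\mathrm{Lip}(f_{(i,t)},d)$. Conditions: (H1) for every $x\in\mathbb X$ and every $i$, the map $t\mapsto f_{(i,t)}(x)$ is continuous on $[0,1]$; (H2) $\mathrm{Lip}(F_t,d)<1$ for all $t\in[0,1)$; (H3) for each $i$ the limit $q_i=\lim_{t\to1^-}q_{i,t}$ exists, where $q_{i,t}$ is the unique fixed point of $f_{(i,t)}$ for $t\in[0,1)$; $Q=\{q_1,\dots,q_N\}$. For an IFS $F$ (a finite or infinite family of continuous self-maps) and $S\subseteq\mathbb X$, the Hutchinson operator is $F(S)=\overline{\bigcup_{f\in F}f(S)}$. The lower transition attractor of $F_t$ is the smallest (w.r.t. inclusion) set $A_\bullet\subseteq\mathbb X$ with $F_1(A_\bullet)=A_\bullet$ and $Q\subseteq A_\bullet$. An IFS $F$ is compact if $F(K)$ is compact for every compact $K\subseteq\mathbb X$.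 The monoid of $F$ is $\mathbb M(F)=\{f_1\circ\cdots\circ f_k:f_j\in F,k\in\mathbb N\}\cup\{\mathrm{id}_{\mathbb X}\}$, regarded as an IFS. *)

theory Defs
  imports "HOL-Analysis.Analysis"
begin

definition Lip :: "('a::metric_space \<Rightarrow> 'b::metric_space) \<Rightarrow> ereal" where
  "Lip f = (SUP p \<in> {(x, y). x \<noteq> y}. ereal (dist (f (fst p)) (f (snd p)) / dist (fst p) (snd p)))"

definition hutchinson :: "('a::topological_space \<Rightarrow> 'a) set \<Rightarrow> 'a set \<Rightarrow> 'a set" where
  "hutchinson F S = closure (\<Union>g\<in>F. g ` S)"

definition compact_IFS :: "('a::topological_space \<Rightarrow> 'a) set \<Rightarrow> bool" where
  "compact_IFS F \<longleftrightarrow> (\<forall>K. compact K \<longrightarrow> compact (hutchinson F K))"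

inductive_set monoid_IFS :: "('a \<Rightarrow> 'a) set \<Rightarrow> ('a \<Rightarrow> 'a) set" for F where
  monoid_id: "id \<in> monoid_IFS F"
| monoid_comp: "g \<in> F \<Longrightarrow> h \<in> monoid_IFS F \<Longrightarrow> g \<circ> h \<in> monoid_IFS F"

definition is_lower_transition_attractor ::
  "('a::topological_space \<Rightarrow> 'a) set \<Rightarrow> 'a set \<Rightarrow> 'a set \<Rightarrow> bool" where
  "is_lower_transition_attractor F1 Q A \<longleftrightarrow>
     hutchinson F1 A = A \<and> Q \<subseteq> A \<and>
     (\<forall>B. hutchinson F1 B = B \<and> Q \<subseteq> B \<longrightarrow> A \<subseteq> B)"

end

theory Submission
  imports Defs
begin

text \<open>Each endpoint map \<open>f(i,1)\<close> is a pointwise limit of contractions, hence nonexpansive,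
and it fixes \<open>q\<^sub>i\<close>, the limit of the fixed points of \<open>f(i,t)\<close>; the endpoint maps with
\<open>i \<notin> J\<close> are therefore contractions with a common ratio \<open>c < 1\<close>. The closure of the orbit
of \<open>Q\<close> under \<open>F\<^sub>1\<close> is \<open>F\<^sub>1\<close>-invariant and contains \<open>Q\<close>, so it contains the closed set
\<open>A\<^sub>\<bullet>\<close>, and it suffices that this orbit is totally bounded. If the orbit lies within \<open>r\<close> of a
compact set \<open>L\<close>, it lies within \<open>c r\<close> of the compact set \<open>\<bbbM>(Q \<union> \<Union>\<^sub>i\<^sub>\<notin>\<^sub>J f(i,1) L)\<close>, where
\<open>\<bbbM>\<close> is the monoid of the maps in \<open>J\<close>: these are nonexpansive and leave that set invariant,
while the other maps contract onto the images of \<open>L\<close>. Starting from an approximation by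
\<open>\<bbbM>(Q)\<close>, this gives compact approximations at every scale \<open>c\<^sup>n R\<close>.\<close>

lemma dist_le_of_Lip_le:
  assumes "Lip g \<le> ereal r"
  shows "dist (g x) (g y) \<le> r * dist x y"
proof (cases "x = y")
  case False
  have "ereal (dist (g x) (g y) / dist x y) \<le> Lip g"
    unfolding Lip_def using False
    by (intro SUP_upper2[of "(x, y)"]) auto
  then have "dist (g x) (g y) / dist x y \<le> r"
    using assms by (meson ereal_less_eq(3) order_trans)
  then show ?thesis using False by (simp add: divide_le_eq)
qed simp

lemma Lip_le_of_dist_le:
  fixes g :: "'a::metric_space \<Rightarrow> 'b::metric_space"
  assumes "\<And>x y. dist (g x) (g y) \<le> r * dist x y"
  shows "Lip g \<le> ereal r"
  unfolding Lip_def
proof (rule SUP_least)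
  fix p :: "'a \<times> 'a" assume "p \<in> {(x, y). x \<noteq> y}"
  then have "dist (fst p) (snd p) > 0" by auto
  then show "ereal (dist (g (fst p)) (g (snd p)) / dist (fst p) (snd p)) \<le> ereal r"
    using assms by (simp add: divide_le_eq)
qed

lemma uniform_contraction_of_Lip_less_one:
  assumes "finite H" and "\<And>g. g \<in> H \<Longrightarrow> Lip g < 1"
  obtains c where "0 \<le> c" "c < 1" "\<And>g x y. g \<in> H \<Longrightarrow> dist (g x) (g y) \<le> c * dist x y"
proof -
  define m where "m = Max (insert 0 (Lip ` H))"
  have "0 \<le> m" "m < 1" using assms by (auto simp: m_def)
  then obtain c where m: "m = ereal c" and "0 \<le> c" "c < 1" by (cases m) auto
  have "Lip g \<le> ereal c" if "g \<in> H" for g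
    unfolding m[symmetric] m_def using assms(1) that by (intro Max_ge) auto
  then show thesis using \<open>0 \<le> c\<close> \<open>c < 1\<close> by (intro that dist_le_of_Lip_le) auto
qed

lemma fixed_point_THE_of_Lip_less_one:
  fixes g :: "'a::complete_space \<Rightarrow> 'a"
  assumes "Lip g < 1"
  shows "g (THE x. g x = x) = (THE x. g x = x)"
proof -
  obtain c where c: "0 \<le> c" "c < 1" "\<And>h x y. h \<in> {g} \<Longrightarrow> dist (h x) (h y) \<le> c * dist x y"
    by (rule uniform_contraction_of_Lip_less_one[of "{g}"]) (use assms in auto)
  have "\<exists>!x. g x = x" using c by (intro banach_fix_type) auto
  then show ?thesis by (rule theI')
qed

lemma Lip_le_one_of_pointwise_limit:
  assumes "F \<noteq> bot" and "\<And>x. ((\<lambda>t. g t x) \<longlongrightarrow> h x) F"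
    and "eventually (\<lambda>t. Lip (g t) \<le> 1) F"
  shows "Lip h \<le> 1"
proof -
  have "dist (h x) (h y) \<le> 1 * dist x y" for x y
  proof (rule tendsto_le[OF assms(1) tendsto_const])
    show "((\<lambda>t. dist (g t x) (g t y)) \<longlongrightarrow> dist (h x) (h y)) F"
      using assms(2) by (intro tendsto_dist)
    show "eventually (\<lambda>t. dist (g t x) (g t y) \<le> 1 * dist x y) F"
      using assms(3) by eventually_elim (rule dist_le_of_Lip_le, simp add: one_ereal_def)
  qed
  then show ?thesis using Lip_le_of_dist_le by (metis one_ereal_def)
qed

lemma fixed_point_of_pointwise_limit:
  fixes g :: "'b \<Rightarrow> 'a::complete_space \<Rightarrow> 'a"
  assumes F: "F \<noteq> bot" and lim: "\<And>x. ((\<lambda>t. g t x) \<longlongrightarrow> h x) F"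
    and contr: "eventually (\<lambda>t. Lip (g t) < 1) F"
    and fix_lim: "((\<lambda>t. THE x. g t x = x) \<longlongrightarrow> q) F"
  shows "h q = q"
proof -
  define p where "p t = (THE x. g t x = x)" for t
  have "eventually (\<lambda>t. norm (dist (p t) (h q)) \<le> dist (p t) q + dist (g t q) (h q)) F"
    using contr
  proof eventually_elim
    case (elim t)
    have fixed: "g t (p t) = p t"
      unfolding p_def by (rule fixed_point_THE_of_Lip_less_one[OF elim])
    have "dist (p t) (h q) \<le> dist (g t (p t)) (g t q) + dist (g t q) (h q)"
      unfolding fixed by (rule dist_triangle)
    also have "dist (g t (p t)) (g t q) \<le> 1 * dist (p t) q"
      using elim by (intro dist_le_of_Lip_le) (simp add: one_ereal_def)
    finally show ?case by simp
  qed
  moreover have "((\<lambda>t. dist (p t) q + dist (g t q) (h q)) \<longlongrightarrow> 0) F"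
  proof (rule tendsto_add_zero)
    show "((\<lambda>t. dist (p t) q) \<longlongrightarrow> 0) F"
      using fix_lim[folded p_def] by (rule tendsto_dist_iff[THEN iffD1])
    show "((\<lambda>t. dist (g t q) (h q)) \<longlongrightarrow> 0) F"
      using lim by (rule tendsto_dist_iff[THEN iffD1])
  qed
  ultimately have "(p \<longlongrightarrow> h q) F"
    by (rule tendsto_dist_iff[THEN iffD2, OF Lim_null_comparison])
  from tendsto_unique[OF F this fix_lim[folded p_def]] show ?thesis .
qed

lemma subset_hutchinson_monoid_IFS: "S \<subseteq> hutchinson (monoid_IFS G) S"
  unfolding hutchinson_def using monoid_IFS.monoid_id[of G] closure_subset by fastforce

lemma image_hutchinson_monoid_IFS_subset:
  assumes "g \<in> G" and "continuous_on UNIV g"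
  shows "g ` hutchinson (monoid_IFS G) S \<subseteq> hutchinson (monoid_IFS G) S"
  unfolding hutchinson_def
proof (rule image_closure_subset)
  show "continuous_on (closure (\<Union>h\<in>monoid_IFS G. h ` S)) g"
    using assms(2) by (rule continuous_on_subset) simp
  show "closed (closure (\<Union>h\<in>monoid_IFS G. h ` S))" by simp
  have "g \<circ> h \<in> monoid_IFS G" if "h \<in> monoid_IFS G" for h
    using assms(1) that by (rule monoid_IFS.monoid_comp)
  then have "g ` (\<Union>h\<in>monoid_IFS G. h ` S) \<subseteq> (\<Union>h\<in>monoid_IFS G. h ` S)"
    unfolding image_UN image_comp by blast
  then show "g ` (\<Union>h\<in>monoid_IFS G. h ` S) \<subseteq> closure (\<Union>h\<in>monoid_IFS G. h ` S)"
    using closure_subset by (rule order_trans)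
qed

inductive_set IFS_orbit :: "('a \<Rightarrow> 'a) set \<Rightarrow> 'a set \<Rightarrow> 'a set" for F Q where
  IFS_orbit_base: "q \<in> Q \<Longrightarrow> q \<in> IFS_orbit F Q"
| IFS_orbit_step: "x \<in> IFS_orbit F Q \<Longrightarrow> g \<in> F \<Longrightarrow> g x \<in> IFS_orbit F Q"

lemma hutchinson_closure_IFS_orbit:
  assumes cont: "\<And>g. g \<in> F \<Longrightarrow> continuous_on UNIV g"
    and fixed: "\<And>q. q \<in> Q \<Longrightarrow> \<exists>g\<in>F. g q = q"
  shows "hutchinson F (closure (IFS_orbit F Q)) = closure (IFS_orbit F Q)"
proof
  have "g ` closure (IFS_orbit F Q) \<subseteq> closure (IFS_orbit F Q)" if "g \<in> F" for g
  proof (rule image_closure_subset)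
    show "continuous_on (closure (IFS_orbit F Q)) g"
      using cont[OF that] by (rule continuous_on_subset) simp
    have "g ` IFS_orbit F Q \<subseteq> IFS_orbit F Q"
      using that by (auto intro: IFS_orbit_step)
    then show "g ` IFS_orbit F Q \<subseteq> closure (IFS_orbit F Q)"
      using closure_subset by (rule order_trans)
  qed simp
  then show "hutchinson F (closure (IFS_orbit F Q)) \<subseteq> closure (IFS_orbit F Q)"
    unfolding hutchinson_def by (intro closure_minimal UN_least) auto
  have "x \<in> (\<Union>g\<in>F. g ` IFS_orbit F Q)" if "x \<in> IFS_orbit F Q" for x
    using that
  proof cases
    case IFS_orbit_base
    then obtain g where "g \<in> F" "x = g x" using fixed by metis
    then show ?thesis using that by blast
  qed blast
  then have "IFS_orbit F Q \<subseteq> (\<Union>g\<in>F. g ` closure (IFS_orbit F Q))"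
    using closure_subset[of "IFS_orbit F Q"] by blast
  then show "closure (IFS_orbit F Q) \<subseteq> hutchinson F (closure (IFS_orbit F Q))"
    unfolding hutchinson_def by (rule closure_mono)
qed

lemma lower_transition_attractor_subset_closure_IFS_orbit:
  assumes "is_lower_transition_attractor F Q A"
    and "\<And>g. g \<in> F \<Longrightarrow> continuous_on UNIV g" and "\<And>q. q \<in> Q \<Longrightarrow> \<exists>g\<in>F. g q = q"
  shows "A \<subseteq> closure (IFS_orbit F Q)"
proof -
  have "Q \<subseteq> IFS_orbit F Q" by (auto intro: IFS_orbit_base)
  then have "Q \<subseteq> closure (IFS_orbit F Q)" using closure_subset by (rule order_trans)
  moreover have "hutchinson F (closure (IFS_orbit F Q)) = closure (IFS_orbit F Q)"
    using assms(2,3) by (rule hutchinson_closure_IFS_orbit)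
  ultimately show ?thesis
    using assms(1) unfolding is_lower_transition_attractor_def by simp
qed

lemma closed_lower_transition_attractor:
  assumes "is_lower_transition_attractor F Q A"
  shows "closed A"
  using assms unfolding is_lower_transition_attractor_def hutchinson_def by (metis closed_closure)

lemma compact_closure_if_near_compacts:
  fixes S :: "'a::complete_space set"
  assumes near: "\<And>e. e > 0 \<Longrightarrow> \<exists>L. compact L \<and> (\<forall>x\<in>S. \<exists>z\<in>L. dist x z \<le> e)"
  shows "compact (closure S)"
  unfolding compact_eq_totally_bounded
proof (intro conjI allI impI)
  show "complete (closure S)" by (simp add: complete_eq_closed)
  fix e :: real assume "e > 0"
  then obtain L where L: "compact L" "\<forall>x\<in>S. \<exists>z\<in>L. dist x z \<le> e / 4"
    using near[of "e / 4"] by auto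
  obtain k where k: "finite k" "L \<subseteq> (\<Union>w\<in>k. ball w (e / 2))"
    using seq_compact_imp_totally_bounded[OF compact_imp_seq_compact[OF L(1)]] \<open>e > 0\<close>
    by (meson half_gt_zero)
  have "x \<in> (\<Union>w\<in>k. ball w e)" if "x \<in> closure S" for x
  proof -
    obtain y where y: "y \<in> S" "dist y x < e / 4"
      using \<open>x \<in> closure S\<close> \<open>e > 0\<close> closure_approachable[of x S]
      by (meson zero_less_divide_iff zero_less_numeral)
    obtain z where z: "z \<in> L" "dist y z \<le> e / 4" using L(2) y(1) by blast
    obtain w where w: "w \<in> k" "dist w z < e / 2" using k(2) z(1) by auto
    have "dist w x \<le> dist w z + dist z y + dist y x"
      using dist_triangle[of w x z] dist_triangle[of z x y] by linarith
    also have "\<dots> < e" using w z y by (simp add: dist_commute)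
    finally show ?thesis using w(1) by auto
  qed
  then show "\<exists>k. finite k \<and> closure S \<subseteq> (\<Union>w\<in>k. ball w e)" using k(1) by blast
qed

locale partly_contractive_IFS =
  fixes F G :: "('a::metric_space \<Rightarrow> 'a) set" and Q :: "'a set" and c :: real
  assumes finite_F: "finite F" and finite_Q: "finite Q" and G_subset: "G \<subseteq> F"
    and continuous: "\<And>g. g \<in> F \<Longrightarrow> continuous_on UNIV g"
    and nonexpansive: "\<And>g x y. g \<in> F \<Longrightarrow> dist (g x) (g y) \<le> dist x y"
    and c_nonneg: "0 \<le> c" and c_less_1: "c < 1"
    and contraction: "\<And>g x y. g \<in> F - G \<Longrightarrow> dist (g x) (g y) \<le> c * dist x y"
    and fixed_point: "\<And>g. g \<in> F - G \<Longrightarrow> \<exists>q\<in>Q. g q = q"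
    and compact_monoid: "compact_IFS (monoid_IFS G)"
begin

lemma G_invariant_hutchinson_monoid_IFS:
  "g \<in> G \<Longrightarrow> g ` hutchinson (monoid_IFS G) S \<subseteq> hutchinson (monoid_IFS G) S"
  using image_hutchinson_monoid_IFS_subset continuous G_subset by blast

lemma compact_hutchinson_monoid_IFS: "compact K \<Longrightarrow> compact (hutchinson (monoid_IFS G) K)"
  using compact_monoid unfolding compact_IFS_def by blast

lemma IFS_orbit_near_G_invariant:
  assumes "x \<in> IFS_orbit F Q"
    and "Q \<subseteq> L" and "\<And>g. g \<in> G \<Longrightarrow> g ` L \<subseteq> L" and "0 \<le> r"
    and contracted: "\<And>x g z. x \<in> IFS_orbit F Q \<Longrightarrow> g \<in> F - G \<Longrightarrow> z \<in> L \<Longrightarrow> dist x z \<le> r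
      \<Longrightarrow> \<exists>z'\<in>L. dist (g x) z' \<le> r"
  shows "\<exists>z\<in>L. dist x z \<le> r"
  using assms(1)
proof induction
  case (IFS_orbit_base q)
  then show ?case using assms(2,4) by (intro bexI[of _ q]) auto
next
  case (IFS_orbit_step x g)
  then obtain z where z: "z \<in> L" "dist x z \<le> r" by blast
  show ?case
  proof (cases "g \<in> G")
    case True
    then have "g z \<in> L" using assms(3) z(1) by blast
    moreover have "dist (g x) (g z) \<le> r"
      using nonexpansive[OF \<open>g \<in> F\<close>] z(2) by (rule order_trans)
    ultimately show ?thesis by blast
  next
    case False
    then show ?thesis using contracted IFS_orbit_step z by blast
  qed
qed

lemma IFS_orbit_near_compact:
  obtains K R where "compact K" "0 \<le> R" "\<And>x. x \<in> IFS_orbit F Q \<Longrightarrow> \<exists>z\<in>K. dist x z \<le> R"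
proof -
  define K where "K = hutchinson (monoid_IFS G) Q"
  have "compact K"
    unfolding K_def using compact_hutchinson_monoid_IFS finite_Q finite_imp_compact by blast
  define D where "D = diameter K"
  have diam: "dist x y \<le> D" if "x \<in> K" "y \<in> K" for x y
    unfolding D_def using diameter_bounded_bound compact_imp_bounded \<open>compact K\<close> that by blast
  \<comment> \<open>\<open>R\<close> solves \<open>c (R + D) = R\<close>: a contraction pulls a point within \<open>R + D\<close> of its
    fixed point back to within \<open>R\<close>.\<close>
  define R where "R = c * D / (1 - c)"
  have "0 \<le> D"
    unfolding D_def using \<open>compact K\<close> by (intro diameter_ge_0 compact_imp_bounded)
  then have "0 \<le> R" unfolding R_def using c_nonneg c_less_1 by simp
  have "Q \<subseteq> K" unfolding K_def by (rule subset_hutchinson_monoid_IFS)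
  have "\<exists>z\<in>K. dist x z \<le> R" if "x \<in> IFS_orbit F Q" for x
    using that \<open>Q \<subseteq> K\<close> _ \<open>0 \<le> R\<close>
  proof (rule IFS_orbit_near_G_invariant)
    show "g ` K \<subseteq> K" if "g \<in> G" for g
      unfolding K_def using that by (rule G_invariant_hutchinson_monoid_IFS)
    fix x g z assume g: "g \<in> F - G" and z: "z \<in> K" "dist x z \<le> R"
    obtain q where q: "q \<in> Q" "g q = q" using fixed_point[OF g] by blast
    have "dist (g x) q \<le> c * dist x q" using contraction[OF g, of x q] q(2) by simp
    also have "\<dots> \<le> c * (R + D)"
      using dist_triangle[of x q z] diam[OF z(1)] \<open>Q \<subseteq> K\<close> q(1) z(2) c_nonneg
      by (intro mult_left_mono) force+
    also have "\<dots> = R" using c_less_1 unfolding R_def by (simp add: field_simps)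
    finally show "\<exists>z'\<in>K. dist (g x) z' \<le> R" using q(1) \<open>Q \<subseteq> K\<close> by blast
  qed
  then show thesis using that \<open>compact K\<close> \<open>0 \<le> R\<close> by blast
qed

lemma IFS_orbit_near_compact_contract:
  assumes "compact L" and "0 \<le> r" and near: "\<And>x. x \<in> IFS_orbit F Q \<Longrightarrow> \<exists>z\<in>L. dist x z \<le> r"
  obtains L' where "compact L'" "\<And>x. x \<in> IFS_orbit F Q \<Longrightarrow> \<exists>z\<in>L'. dist x z \<le> c * r"
proof -
  define L' where "L' = hutchinson (monoid_IFS G) (Q \<union> (\<Union>g\<in>F - G. g ` L))"
  have "compact (g ` L)" if "g \<in> F - G" for g
    using continuous_on_subset[OF continuous] that \<open>compact L\<close>
    by (intro compact_continuous_image) auto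
  then have "compact (Q \<union> (\<Union>g\<in>F - G. g ` L))"
    using finite_Q finite_F by (intro compact_Un compact_UN) (auto intro: finite_imp_compact)
  then have "compact L'" unfolding L'_def by (rule compact_hutchinson_monoid_IFS)
  have L': "Q \<union> (\<Union>g\<in>F - G. g ` L) \<subseteq> L'" unfolding L'_def by (rule subset_hutchinson_monoid_IFS)
  have "\<exists>z\<in>L'. dist x z \<le> c * r" if "x \<in> IFS_orbit F Q" for x
    using that _ _ mult_nonneg_nonneg[OF c_nonneg \<open>0 \<le> r\<close>]
  proof (rule IFS_orbit_near_G_invariant)
    show "Q \<subseteq> L'" using L' by blast
    show "g ` L' \<subseteq> L'" if "g \<in> G" for g
      unfolding L'_def using that by (rule G_invariant_hutchinson_monoid_IFS)
    fix x g assume x: "x \<in> IFS_orbit F Q" and g: "g \<in> F - G"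
    obtain w where w: "w \<in> L" "dist x w \<le> r" using near[OF x] by blast
    have "dist (g x) (g w) \<le> c * r"
      using contraction[OF g, of x w] mult_left_mono[OF w(2) c_nonneg] by linarith
    moreover have "g w \<in> L'" using L' g w(1) by blast
    ultimately show "\<exists>z'\<in>L'. dist (g x) z' \<le> c * r" by blast
  qed
  then show thesis using that \<open>compact L'\<close> by blast
qed

lemma IFS_orbit_near_compact_at_every_scale:
  assumes "e > 0"
  shows "\<exists>L. compact L \<and> (\<forall>x\<in>IFS_orbit F Q. \<exists>z\<in>L. dist x z \<le> e)"
proof -
  obtain K R where K: "compact K" "0 \<le> R" "\<And>x. x \<in> IFS_orbit F Q \<Longrightarrow> \<exists>z\<in>K. dist x z \<le> R"
    using IFS_orbit_near_compact by blast
  have scale: "\<exists>L. compact L \<and> (\<forall>x\<in>IFS_orbit F Q. \<exists>z\<in>L. dist x z \<le> c ^ n * R)" for n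
  proof (induction n)
    case 0
    then show ?case using K by auto
  next
    case (Suc n)
    then obtain L where "compact L" "\<And>x. x \<in> IFS_orbit F Q \<Longrightarrow> \<exists>z\<in>L. dist x z \<le> c ^ n * R"
      by blast
    from IFS_orbit_near_compact_contract[OF this(1) _ this(2)] show ?case
      using c_nonneg K(2) by (metis mult.assoc power_Suc zero_le_mult_iff zero_le_power)
  qed
  have "(\<lambda>n. c ^ n * R) \<longlonglongrightarrow> 0"
    using c_nonneg c_less_1 by (intro tendsto_mult_left_zero LIMSEQ_power_zero) simp
  then have "eventually (\<lambda>n. c ^ n * R < e) sequentially"
    using \<open>e > 0\<close> by (rule order_tendstoD)
  then obtain n where "c ^ n * R < e" by (auto simp: eventually_sequentially)
  then show ?thesis using scale[of n] by (meson less_imp_le order_trans)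
qed

end

lemma compact_closure_IFS_orbit:
  fixes F G :: "('a::complete_space \<Rightarrow> 'a) set"
  assumes "partly_contractive_IFS F G Q c"
  shows "compact (closure (IFS_orbit F Q))"
  using compact_closure_if_near_compacts
    partly_contractive_IFS.IFS_orbit_near_compact_at_every_scale[OF assms] by blast

lemma compact_lower_transition_attractor:
  fixes F :: "('a::complete_space \<Rightarrow> 'a) set"
  assumes "finite F" and "finite Q"
    and cont: "\<And>g. g \<in> F \<Longrightarrow> continuous_on UNIV g" and Lip: "\<And>g. g \<in> F \<Longrightarrow> Lip g \<le> 1"
    and "\<And>g. g \<in> F \<Longrightarrow> \<exists>q\<in>Q. g q = q" and fixed: "\<And>q. q \<in> Q \<Longrightarrow> \<exists>g\<in>F. g q = q"
    and "compact_IFS (monoid_IFS {g \<in> F. Lip g = 1})"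
    and A: "is_lower_transition_attractor F Q A"
  shows "compact A"
proof -
  define G where "G = {g \<in> F. Lip g = 1}"
  have "finite (F - G)" using \<open>finite F\<close> by simp
  moreover have "Lip g < 1" if "g \<in> F - G" for g
    using that Lip unfolding G_def by (force simp: order_less_le)
  ultimately obtain c where "0 \<le> c" "c < 1"
    and "\<And>g x y. g \<in> F - G \<Longrightarrow> dist (g x) (g y) \<le> c * dist x y"
    using uniform_contraction_of_Lip_less_one by blast
  then have "partly_contractive_IFS F G Q c"
  proof unfold_locales
    show "dist (g x) (g y) \<le> dist x y" if "g \<in> F" for g x y
      using dist_le_of_Lip_le[of g 1 x y] Lip[OF that] by (simp add: one_ereal_def)
  qed (use assms in \<open>auto simp: G_def\<close>)
  then have "compact (closure (IFS_orbit F Q))" by (rule compact_closure_IFS_orbit)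
  moreover have "A \<subseteq> closure (IFS_orbit F Q)"
    using A cont fixed by (rule lower_transition_attractor_subset_closure_IFS_orbit)
  ultimately show ?thesis
    using closed_lower_transition_attractor[OF A] by (metis compact_Int_closed inf.absorb2)
qed

lemma endpoint_of_contraction_family:
  fixes g :: "real \<Rightarrow> 'a::complete_space \<Rightarrow> 'a"
  assumes cont: "\<And>x. continuous_on {0..1} (\<lambda>t. g t x)"
    and contr: "\<And>t. t \<in> {0..<1} \<Longrightarrow> Lip (g t) < 1"
    and fix_lim: "((\<lambda>t. THE x. g t x = x) \<longlongrightarrow> p) (at_left 1)"
  shows "Lip (g 1) \<le> 1" and "g 1 p = p"
proof -
  have lim: "((\<lambda>t. g t x) \<longlongrightarrow> g 1 x) (at_left 1)" for x
    using cont by (intro continuous_on_Icc_at_leftD[of 0 1 "\<lambda>t. g t x", simplified]) auto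
  have ev: "eventually (\<lambda>t. Lip (g t) < 1) (at_left 1)"
    using eventually_at_left_real[OF zero_less_one] by eventually_elim (simp add: contr)
  show "Lip (g 1) \<le> 1"
    using ev by (intro Lip_le_one_of_pointwise_limit[OF _ lim]) (auto elim: eventually_mono)
  show "g 1 p = p"
    using ev fix_lim by (intro fixed_point_of_pointwise_limit[OF _ lim]) auto
qed

theorem mainTheorem4:
  fixes f :: "nat \<Rightarrow> real \<Rightarrow> 'a::complete_space \<Rightarrow> 'a"
    and N :: nat
    and q :: "nat \<Rightarrow> 'a"
    and A :: "'a set"
  assumes N2: "N \<ge> 2"
    and cont: "\<forall>i\<in>{1..N}. \<forall>t\<in>{0..1}. continuous_on UNIV (f i t)"
    and H1: "\<forall>i\<in>{1..N}. \<forall>x. continuous_on {0..1} (\<lambda>t. f i t x)"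
    and H2: "\<forall>t\<in>{0..<1}. \<forall>i\<in>{1..N}. Lip (f i t) < 1"
    and H3: "\<forall>i\<in>{1..N}. ((\<lambda>t. THE x. f i t x = x) \<longlongrightarrow> q i) (at_left 1)"
    and Mcpt: "compact_IFS (monoid_IFS {f i 1 | i. i \<in> {1..N} \<and> Lip (f i 1) = 1})"
    and A: "is_lower_transition_attractor {f i 1 | i. i \<in> {1..N}} (q ` {1..N}) A"
  shows "compact A"
proof -
  have endpoint: "Lip (f i 1) \<le> 1 \<and> f i 1 (q i) = q i" if "i \<in> {1..N}" for i
    using H1 H2 H3 that endpoint_of_contraction_family[of "f i" "q i"] by auto
  define F where "F = {f i 1 | i. i \<in> {1..N}}"
  have F_image: "F = (\<lambda>i. f i 1) ` {1..N}" unfolding F_def by blast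
  have "{f i 1 | i. i \<in> {1..N} \<and> Lip (f i 1) = 1} = {g \<in> F. Lip g = 1}"
    unfolding F_def by blast
  with Mcpt have Mcpt_F: "compact_IFS (monoid_IFS {g \<in> F. Lip g = 1})" by simp
  show ?thesis
  proof (rule compact_lower_transition_attractor[where Q = "q ` {1..N}"])
    show "finite F" "finite (q ` {1..N})" by (simp_all add: F_image)
    show "is_lower_transition_attractor F (q ` {1..N}) A" unfolding F_def by (fact A)
    show "continuous_on UNIV g" if "g \<in> F" for g
      using that cont unfolding F_image by auto
    show "Lip g \<le> 1" "\<exists>p\<in>q ` {1..N}. g p = p" if "g \<in> F" for g
      using that endpoint unfolding F_image by blast+
    show "\<exists>g\<in>F. g p = p" if "p \<in> q ` {1..N}" for p
      using that endpoint unfolding F_image by blast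
  qed (fact Mcpt_F)
qed

end
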